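(* Let $G=(V_1\cup V_2,E)$ be a regular bipartite graph with stable sets satisfying $|V_1|=|V_2|=n$. If $G$ is not a mirror bipartite graph, then $n\ge 6$.
   Context: A bipartite graph $G=(V_1\cup V_2,E)$ with stable sets $V_1,V_2$ is mirror if there is a bijection $\varphi:V_1\to V_2$ such that for all $u,v\in V_1$, $u\varphi(v)\in E$ if and only if $\varphi(u)v\in E$. *)

theory Defs
  imports Main
begin

definition bipartite_graph :: "'a set \<Rightarrow> 'a set \<Rightarrow> 'a set set \<Rightarrow> bool" where
  "bipartite_graph V1 V2 E \<longleftrightarrow> finite V1 \<and> finite V2 \<and> V1 \<inter> V2 = {} \<and>
     (\<forall>e\<in>E. \<exists>u\<in>V1. \<exists>v\<in>V2. e = {u, v})"

definition degree :: "'a set set \<Rightarrow> 'a \<Rightarrow> nat" where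
  "degree E x = card {e \<in> E. x \<in> e}"

definition regular_graph :: "'a set \<Rightarrow> 'a set set \<Rightarrow> bool" where
  "regular_graph V E \<longleftrightarrow> (\<exists>k. \<forall>x\<in>V. degree E x = k)"

definition mirror :: "'a set \<Rightarrow> 'a set \<Rightarrow> 'a set set \<Rightarrow> bool" where
  "mirror V1 V2 E \<longleftrightarrow> (\<exists>\<phi>. bij_betw \<phi> V1 V2 \<and>
     (\<forall>u\<in>V1. \<forall>v\<in>V1. {u, \<phi> v} \<in> E \<longleftrightarrow> {\<phi> u, v} \<in> E))"

end

theory Submission
  imports Defs
begin

text \<open>Everything depends only on the biadjacency relation between the two sides, which is
  \<open>k\<close>-regular. Complementing the relation preserves being mirror and turns degree \<open>k\<close> into
  \<open>n - k\<close>, so for \<open>n \<le> 5\<close> we may assume \<open>k \<le> 2\<close>. Degrees 0 and 1 are immediate (any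
  bijection, resp. the perfect matching itself). A 2-regular relation is handled by
  induction on its size, producing a mirror bijection that sends a prescribed edge
  \<open>x y\<close>: if \<open>x\<close> and \<open>y\<close> lie on a 4-cycle, delete it; otherwise contract the path
  \<open>u - y - x - v\<close> to the single edge \<open>u v\<close>, whose mirror bijection sends \<open>u\<close> to \<open>v\<close>
  and extends by \<open>x \<mapsto> y\<close>.\<close>

definition mirror_bij :: "('a \<Rightarrow> 'b) \<Rightarrow> 'a set \<Rightarrow> 'b set \<Rightarrow> ('a \<Rightarrow> 'b \<Rightarrow> bool) \<Rightarrow> bool" where
  "mirror_bij \<phi> V1 V2 A \<longleftrightarrow>
     bij_betw \<phi> V1 V2 \<and> (\<forall>u\<in>V1. \<forall>w\<in>V1. A u (\<phi> w) = A w (\<phi> u))"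

definition mirror_rel :: "'a set \<Rightarrow> 'b set \<Rightarrow> ('a \<Rightarrow> 'b \<Rightarrow> bool) \<Rightarrow> bool" where
  "mirror_rel V1 V2 A \<longleftrightarrow> (\<exists>\<phi>. mirror_bij \<phi> V1 V2 A)"

definition biregular :: "'a set \<Rightarrow> 'b set \<Rightarrow> ('a \<Rightarrow> 'b \<Rightarrow> bool) \<Rightarrow> nat \<Rightarrow> bool" where
  "biregular V1 V2 A k \<longleftrightarrow>
     (\<forall>u\<in>V1. card {v\<in>V2. A u v} = k) \<and> (\<forall>v\<in>V2. card {u\<in>V1. A u v} = k)"

lemma mirror_rel_complement: "mirror_rel V1 V2 (\<lambda>u v. \<not> A u v) \<longleftrightarrow> mirror_rel V1 V2 A"
  unfolding mirror_rel_def mirror_bij_def by auto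

lemma biregular_complement:
  assumes "finite V1" "finite V2" "card V1 = n" "card V2 = n" "biregular V1 V2 A k"
  shows "biregular V1 V2 (\<lambda>u v. \<not> A u v) (n - k)"
proof -
  have "{v\<in>V2. \<not> A u v} = V2 - {v\<in>V2. A u v}" for u
    by auto
  moreover have "{u\<in>V1. \<not> A u v} = V1 - {u\<in>V1. A u v}" for v
    by auto
  ultimately show ?thesis
    using assms by (auto simp: biregular_def card_Diff_subset)
qed

lemma card_2_other_element:
  assumes "card {w\<in>W. P w} = 2" "y \<in> W" "P y"
  obtains z where "z \<in> W" "z \<noteq> y" "\<forall>w\<in>W. P w \<longleftrightarrow> w = y \<or> w = z"
proof -
  obtain a b where ab: "{w\<in>W. P w} = {a, b}" "a \<noteq> b"
    using assms(1) by (meson card_2_iff)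
  then have "y = a \<or> y = b"
    using assms(2,3) by blast
  then show ?thesis
    using ab that by (auto simp: set_eq_iff)
qed

lemma biregular_obtain_edge:
  assumes "biregular V1 V2 A k" "k > 0" "x \<in> V1"
  obtains y where "y \<in> V2" "A x y"
proof -
  have "card {y\<in>V2. A x y} = k"
    using assms(1,3) by (simp add: biregular_def)
  then have "{y\<in>V2. A x y} \<noteq> {}"
    using assms(2) card_gt_0_iff by metis
  then show ?thesis
    using that by blast
qed

lemma biregular_0_mirror_rel:
  assumes "finite V1" "finite V2" "card V1 = card V2" "biregular V1 V2 A 0"
  shows "mirror_rel V1 V2 A"
proof -
  obtain \<phi> where \<phi>: "bij_betw \<phi> V1 V2"
    using assms(1-3) finite_same_card_bij by blast
  have "\<not> A u v" if "u \<in> V1" "v \<in> V2" for u v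
    using assms(2,4) that by (auto simp: biregular_def)
  then show ?thesis
    using \<phi> bij_betwE unfolding mirror_rel_def mirror_bij_def by fast
qed

lemma biregular_1_mirror_rel:
  assumes "finite V2" "card V1 = card V2" "biregular V1 V2 A 1"
  shows "mirror_rel V1 V2 A"
proof -
  have "\<forall>u\<in>V1. \<exists>v. {v\<in>V2. A u v} = {v}"
    using assms(3) by (simp add: biregular_def card_1_singleton_iff)
  then obtain \<phi> where \<phi>: "\<And>u. u \<in> V1 \<Longrightarrow> {v\<in>V2. A u v} = {\<phi> u}"
    by metis
  have \<phi>_edge: "\<phi> u \<in> V2" "A u (\<phi> u)" if "u \<in> V1" for u
    using \<phi>[OF that] by auto
  have unique: "u = u'" if "v \<in> V2" "u \<in> V1" "u' \<in> V1" "A u v" "A u' v" for u u' v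
  proof -
    obtain z where "{u\<in>V1. A u v} = {z}"
      using assms(3) \<open>v \<in> V2\<close> by (auto simp: biregular_def card_1_singleton_iff)
    then show ?thesis
      using that by (metis (no_types, lifting) mem_Collect_eq singletonD)
  qed
  have inj: "inj_on \<phi> V1"
    using \<phi>_edge unique by (metis inj_onI)
  have "\<phi> ` V1 = V2"
    using \<phi>_edge assms(1,2) card_image[OF inj] by (metis card_subset_eq image_subsetI)
  moreover have "\<forall>u\<in>V1. \<forall>w\<in>V1. A u (\<phi> w) \<longleftrightarrow> u = w"
    using \<phi>_edge unique by metis
  ultimately show ?thesis
    using inj unfolding mirror_rel_def mirror_bij_def bij_betw_def by metis
qed

subsection \<open>Degree two\<close>

lemma biregular_remove_square:
  assumes "biregular V1 V2 A k"
    and "\<forall>w\<in>V1. A w y \<longleftrightarrow> w = x \<or> w = u" "\<forall>w\<in>V1. A w v \<longleftrightarrow> w = x \<or> w = u"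
    and "\<forall>w\<in>V2. A x w \<longleftrightarrow> w = y \<or> w = v" "\<forall>w\<in>V2. A u w \<longleftrightarrow> w = y \<or> w = v"
  shows "biregular (V1 - {x, u}) (V2 - {y, v}) A k"
proof -
  have "{b\<in>V2 - {y, v}. A a b} = {b\<in>V2. A a b}" if "a \<in> V1 - {x, u}" for a
    using assms(2,3) that by auto
  moreover have "{a\<in>V1 - {x, u}. A a b} = {a\<in>V1. A a b}" if "b \<in> V2 - {y, v}" for b
    using assms(4,5) that by auto
  ultimately show ?thesis
    using assms(1) by (simp add: biregular_def)
qed

lemma mirror_bij_extend_square:
  assumes "mirror_bij \<psi> (V1 - {x, u}) (V2 - {y, v}) A"
    and "x \<in> V1" "u \<in> V1" "x \<noteq> u" "y \<in> V2" "v \<in> V2" "y \<noteq> v"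
    and "\<forall>w\<in>V1. A w y \<longleftrightarrow> w = x \<or> w = u" "\<forall>w\<in>V1. A w v \<longleftrightarrow> w = x \<or> w = u"
    and "\<forall>w\<in>V2. A x w \<longleftrightarrow> w = y \<or> w = v" "\<forall>w\<in>V2. A u w \<longleftrightarrow> w = y \<or> w = v"
  shows "mirror_bij (\<psi>(x := y, u := v)) V1 V2 A"
proof -
  let ?\<phi> = "\<psi>(x := y, u := v)"
  have \<psi>: "bij_betw \<psi> (V1 - {x, u}) (V2 - {y, v})"
    and sym: "\<forall>a\<in>V1 - {x, u}. \<forall>b\<in>V1 - {x, u}. A a (\<psi> b) = A b (\<psi> a)"
    using assms(1) by (auto simp: mirror_bij_def)
  have "bij_betw ?\<phi> (V1 - {x, u}) (V2 - {y, v})"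
    using \<psi> by (rule bij_betw_cong[THEN iffD1, rotated]) auto
  moreover have "bij_betw ?\<phi> {x, u} {y, v}"
    using assms(4,7) by (auto simp: bij_betw_def)
  ultimately have "bij_betw ?\<phi> (V1 - {x, u} \<union> {x, u}) (V2 - {y, v} \<union> {y, v})"
    by (rule bij_betw_combine) auto
  moreover have "V1 - {x, u} \<union> {x, u} = V1" "V2 - {y, v} \<union> {y, v} = V2"
    using assms(2,3,5,6) by auto
  moreover have "\<psi> a \<in> V2 - {y, v}" if "a \<in> V1 - {x, u}" for a
    using bij_betw_apply[OF \<psi> that] .
  ultimately show ?thesis
    using sym assms(2-) unfolding mirror_bij_def by auto
qed

lemma card_insert_Diff_singleton:
  assumes "finite A" "y \<in> A" "v \<notin> A"
  shows "card (insert v (A - {y})) = card A"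
  using assms by (simp add: card_insert_disjoint card_Suc_Diff1 del: card_Diff_insert)

lemma biregular_contract:
  assumes "finite V1" "finite V2" "biregular V1 V2 A k"
    and "x \<in> V1" "u \<in> V1" "u \<noteq> x" "y \<in> V2" "v \<in> V2" "v \<noteq> y" "\<not> A u v"
    and "\<forall>w\<in>V1. A w y \<longleftrightarrow> w = x \<or> w = u" "\<forall>w\<in>V2. A x w \<longleftrightarrow> w = y \<or> w = v"
  shows "biregular (V1 - {x}) (V2 - {y}) (\<lambda>a b. A a b \<or> (a = u \<and> b = v)) k"
proof -
  let ?B = "\<lambda>a b. A a b \<or> (a = u \<and> b = v)"
  have row_u: "{b\<in>V2 - {y}. ?B u b} = insert v ({b\<in>V2. A u b} - {y})"
    using assms(8,9) by auto
  have col_v: "{a\<in>V1 - {x}. ?B a v} = insert u ({a\<in>V1. A a v} - {x})"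
    using assms(5,6) by auto
  have "card {b\<in>V2 - {y}. ?B a b} = k" if "a \<in> V1 - {x}" for a
  proof (cases "a = u")
    case True
    have "card (insert v ({b\<in>V2. A u b} - {y})) = card {b\<in>V2. A u b}"
      using assms(2,7,10,11) \<open>u \<in> V1\<close> by (intro card_insert_Diff_singleton) auto
    then show ?thesis
      using True row_u assms(3,5) by (simp add: biregular_def)
  next
    case False
    then have "{b\<in>V2 - {y}. ?B a b} = {b\<in>V2. A a b}"
      using assms(11) that by auto
    then show ?thesis
      using assms(3) that by (simp add: biregular_def)
  qed
  moreover have "card {a\<in>V1 - {x}. ?B a b} = k" if "b \<in> V2 - {y}" for b
  proof (cases "b = v")
    case True
    have "card (insert u ({a\<in>V1. A a v} - {x})) = card {a\<in>V1. A a v}"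
      using assms(1,4,8,10,12) by (intro card_insert_Diff_singleton) auto
    then show ?thesis
      using True col_v assms(3,8) by (simp add: biregular_def)
  next
    case False
    then have "{a\<in>V1 - {x}. ?B a b} = {a\<in>V1. A a b}"
      using assms(12) that by auto
    then show ?thesis
      using assms(3) that by (simp add: biregular_def)
  qed
  ultimately show ?thesis
    by (simp add: biregular_def)
qed

text \<open>Contracting the edge \<open>u v\<close> only adds the pair \<open>(u, u)\<close> to the symmetric relation
  \<open>(a, b) \<mapsto> A a (\<psi> b)\<close>, because \<open>\<psi>\<close> is injective with \<open>\<psi> u = v\<close>.\<close>

lemma mirror_bij_extend_contraction:
  assumes "mirror_bij \<psi> (V1 - {x}) (V2 - {y}) (\<lambda>a b. A a b \<or> (a = u \<and> b = v))" "\<psi> u = v"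
    and "x \<in> V1" "y \<in> V2" "u \<in> V1" "u \<noteq> x" "A x y"
    and "\<forall>w\<in>V1. A w y \<longleftrightarrow> w = x \<or> w = u" "\<forall>w\<in>V2. A x w \<longleftrightarrow> w = y \<or> w = v"
  shows "mirror_bij (\<psi>(x := y)) V1 V2 A"
proof -
  let ?\<phi> = "\<psi>(x := y)"
  have \<psi>: "bij_betw \<psi> (V1 - {x}) (V2 - {y})"
    and sym: "\<forall>a\<in>V1 - {x}. \<forall>b\<in>V1 - {x}.
      (A a (\<psi> b) \<or> (a = u \<and> \<psi> b = v)) = (A b (\<psi> a) \<or> (b = u \<and> \<psi> a = v))"
    using assms(1) by (auto simp: mirror_bij_def)
  have \<psi>_v: "\<psi> b = v \<longleftrightarrow> b = u" if "b \<in> V1 - {x}" for b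
    using \<psi> assms(2,5,6) that by (metis DiffI bij_betw_iff_bijections singletonD)
  have \<psi>_in: "\<psi> a \<in> V2 - {y}" if "a \<in> V1 - {x}" for a
    using bij_betw_apply[OF \<psi> that] .
  have "bij_betw ?\<phi> (V1 - {x}) (V2 - {y})"
    using \<psi> by (rule bij_betw_cong[THEN iffD1, rotated]) auto
  then have "bij_betw ?\<phi> (V1 - {x} \<union> {x}) (V2 - {y} \<union> {?\<phi> x})"
    by (rule notIn_Un_bij_betw[rotated 2]) auto
  then have "bij_betw ?\<phi> V1 V2"
    using assms(3,4) by (simp add: insert_absorb)
  moreover have "A a (?\<phi> b) = A b (?\<phi> a)" if "a \<in> V1" "b \<in> V1" for a b
    using that sym \<psi>_v \<psi>_in assms(7-9) by (cases "a = x"; cases "b = x") auto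
  ultimately show ?thesis
    unfolding mirror_bij_def by blast
qed

lemma biregular_2_mirror_bij_through_edge:
  assumes "finite V1" "finite V2" "card V1 = card V2" "biregular V1 V2 A 2"
    and "x \<in> V1" "y \<in> V2" "A x y"
  shows "\<exists>\<phi>. mirror_bij \<phi> V1 V2 A \<and> \<phi> x = y"
  using assms
proof (induction "card V1" arbitrary: V1 V2 A x y rule: less_induct)
  case less
  note fin = less.prems(1,2) and reg = less.prems(4) and xy = less.prems(5-7)
  have row: "card {w\<in>V2. A a w} = 2" if "a \<in> V1" for a
    using reg that by (simp add: biregular_def)
  have col: "card {w\<in>V1. A w b} = 2" if "b \<in> V2" for b
    using reg that by (simp add: biregular_def)
  obtain v where v: "v \<in> V2" "v \<noteq> y" and Ax: "\<forall>w\<in>V2. A x w \<longleftrightarrow> w = y \<or> w = v"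
    using card_2_other_element[OF row[OF xy(1)] xy(2,3)] by blast
  obtain u where u: "u \<in> V1" "u \<noteq> x" and Ay: "\<forall>w\<in>V1. A w y \<longleftrightarrow> w = x \<or> w = u"
    using card_2_other_element[OF col[OF xy(2)] xy(1)] xy(3) by blast
  show ?case
  proof (cases "A u v")
    case True
    obtain v' where "\<forall>w\<in>V2. A u w \<longleftrightarrow> w = y \<or> w = v'"
      using card_2_other_element[OF row[OF u(1)] xy(2)] Ay u(1) by blast
    then have Au: "\<forall>w\<in>V2. A u w \<longleftrightarrow> w = y \<or> w = v"
      using True v by blast
    obtain u' where "\<forall>w\<in>V1. A w v \<longleftrightarrow> w = x \<or> w = u'"
      using card_2_other_element[OF col[OF v(1)] xy(1)] Ax v(1) by blast
    then have Av: "\<forall>w\<in>V1. A w v \<longleftrightarrow> w = x \<or> w = u"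
      using True u by blast
    define W1 where "W1 = V1 - {x, u}"
    define W2 where "W2 = V2 - {y, v}"
    have W_fin: "finite W1" "finite W2"
      using fin by (simp_all add: W1_def W2_def)
    have W_card: "card W1 = card W2"
      using fin less.prems(3) xy u v by (simp add: W1_def W2_def card_Diff_subset)
    have W_reg: "biregular W1 W2 A 2"
      unfolding W1_def W2_def using reg Ay Av Ax Au by (rule biregular_remove_square)
    have smaller: "card W1 < card V1"
      unfolding W1_def using fin(1) xy(1) by (intro psubset_card_mono) auto
    obtain \<psi> where \<psi>: "mirror_bij \<psi> W1 W2 A"
    proof (cases "W1 = {}")
      case True
      then have "W2 = {}"
        using W_fin W_card by simp
      then show ?thesis
        using True that by (auto simp: mirror_bij_def bij_betw_def)
    next
      case False
      then obtain a where a: "a \<in> W1"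
        by blast
      then obtain b where "b \<in> W2" "A a b"
        using biregular_obtain_edge[OF W_reg _ a] by auto
      then show ?thesis
        using less.hyps[OF smaller W_fin W_card W_reg a] that by blast
    qed
    have "mirror_bij (\<psi>(x := y, u := v)) V1 V2 A"
      using \<psi> unfolding W1_def W2_def
      by (rule mirror_bij_extend_square) (use xy u v Ay Av Ax Au in auto)
    then show ?thesis
      using u(2) by auto
  next
    case False
    define B where "B = (\<lambda>a b. A a b \<or> (a = u \<and> b = v))"
    have W_fin: "finite (V1 - {x})" "finite (V2 - {y})"
      using fin by simp_all
    have W_card: "card (V1 - {x}) = card (V2 - {y})"
      using fin less.prems(3) xy by simp
    have W_reg: "biregular (V1 - {x}) (V2 - {y}) B 2"
      unfolding B_def using fin reg xy(1) u xy(2) v False Ay Ax by (rule biregular_contract)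
    have smaller: "card (V1 - {x}) < card V1"
      using fin(1) xy(1) by (rule card_Diff1_less)
    have "u \<in> V1 - {x}" "v \<in> V2 - {y}" "B u v"
      using u v by (auto simp: B_def)
    then obtain \<psi> where "mirror_bij \<psi> (V1 - {x}) (V2 - {y}) B" "\<psi> u = v"
      using less.hyps[OF smaller W_fin W_card W_reg] by blast
    then have "mirror_bij (\<psi>(x := y)) V1 V2 A"
      unfolding B_def using xy(1,2) u xy(3) Ay Ax by (rule mirror_bij_extend_contraction)
    then show ?thesis
      by auto
  qed
qed

lemma biregular_2_mirror_rel:
  assumes "finite V1" "finite V2" "card V1 = card V2" "biregular V1 V2 A 2"
  shows "mirror_rel V1 V2 A"
proof (cases "V1 = {}")
  case True
  then show ?thesis
    using assms(2,3) by (auto simp: mirror_rel_def mirror_bij_def bij_betw_def)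
next
  case False
  then obtain x where x: "x \<in> V1"
    by blast
  then obtain y where "y \<in> V2" "A x y"
    using biregular_obtain_edge[OF assms(4) _ x] by auto
  then show ?thesis
    using biregular_2_mirror_bij_through_edge[OF assms x] unfolding mirror_rel_def by blast
qed

lemma biregular_le_2_mirror_rel:
  assumes "finite V1" "finite V2" "card V1 = card V2" "biregular V1 V2 A k" "k \<le> 2"
  shows "mirror_rel V1 V2 A"
proof -
  consider "k = 0" | "k = 1" | "k = 2"
    using assms(5) by linarith
  then show ?thesis
    using assms(1-4) biregular_0_mirror_rel biregular_1_mirror_rel biregular_2_mirror_rel
    by cases simp_all
qed

lemma biregular_small_mirror_rel:
  assumes "finite V1" "finite V2" "card V1 = n" "card V2 = n" "n \<le> 5" "biregular V1 V2 A k"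
  shows "mirror_rel V1 V2 A"
proof (cases "V1 = {}")
  case True
  then show ?thesis
    using assms(2-4) by (auto simp: mirror_rel_def mirror_bij_def bij_betw_def)
next
  case False
  then obtain x where x: "x \<in> V1"
    by blast
  have "k = card {v\<in>V2. A x v}"
    using assms(6) x by (simp add: biregular_def)
  also have "\<dots> \<le> n"
    using assms(2,4) card_mono[of V2 "{v\<in>V2. A x v}"] by auto
  finally consider "k \<le> 2" | "n - k \<le> 2"
    using assms(5) by linarith
  then show ?thesis
  proof cases
    case 1
    then show ?thesis
      using assms by (intro biregular_le_2_mirror_rel[of V1 V2 A k]) auto
  next
    case 2
    have "biregular V1 V2 (\<lambda>u v. \<not> A u v) (n - k)"
      using assms(1-4,6) by (rule biregular_complement)
    then have "mirror_rel V1 V2 (\<lambda>u v. \<not> A u v)"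
      using 2 assms(1-4) by (intro biregular_le_2_mirror_rel) auto
    then show ?thesis
      by (simp add: mirror_rel_complement)
  qed
qed

subsection \<open>Bipartite graphs\<close>

lemma bipartite_graph_swap: "bipartite_graph V1 V2 E \<Longrightarrow> bipartite_graph V2 V1 E"
  unfolding bipartite_graph_def by (metis insert_commute Int_commute)

lemma degree_bipartite:
  assumes "bipartite_graph V1 V2 E" "u \<in> V1"
  shows "degree E u = card {v\<in>V2. {u, v} \<in> E}"
proof -
  have "{e\<in>E. u \<in> e} = (\<lambda>v. {u, v}) ` {v\<in>V2. {u, v} \<in> E}"
    using assms unfolding bipartite_graph_def by fastforce
  moreover have "inj_on (\<lambda>v. {u, v}) {v\<in>V2. {u, v} \<in> E}"
    by (auto simp: inj_on_def doubleton_eq_iff)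
  ultimately show ?thesis
    unfolding degree_def by (simp add: card_image)
qed

lemma biregular_if_regular:
  assumes "bipartite_graph V1 V2 E" "regular_graph (V1 \<union> V2) E"
  obtains k where "biregular V1 V2 (\<lambda>u v. {u, v} \<in> E) k"
proof -
  obtain k where k: "\<forall>x\<in>V1 \<union> V2. degree E x = k"
    using assms(2) unfolding regular_graph_def by blast
  have "card {v\<in>V2. {u, v} \<in> E} = k" if "u \<in> V1" for u
    using k that degree_bipartite[OF assms(1)] by auto
  moreover have "card {u\<in>V1. {u, v} \<in> E} = k" if "v \<in> V2" for v
    using k that degree_bipartite[OF bipartite_graph_swap[OF assms(1)]] by (auto simp: insert_commute)
  ultimately have "biregular V1 V2 (\<lambda>u v. {u, v} \<in> E) k"
    by (simp add: biregular_def)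
  then show ?thesis
    by (rule that)
qed

lemma mirror_iff_mirror_rel: "mirror V1 V2 E \<longleftrightarrow> mirror_rel V1 V2 (\<lambda>u v. {u, v} \<in> E)"
  unfolding mirror_def mirror_rel_def mirror_bij_def by (simp add: insert_commute)

theorem proposition1:
  fixes V1 V2 :: "'a set" and E :: "'a set set" and n :: nat
  assumes "bipartite_graph V1 V2 E"
    and "regular_graph (V1 \<union> V2) E"
    and "card V1 = n" and "card V2 = n"
    and "\<not> mirror V1 V2 E"
  shows "n \<ge> 6"
proof (rule ccontr)
  assume "\<not> n \<ge> 6"
  then have "n \<le> 5"
    by simp
  obtain k where "biregular V1 V2 (\<lambda>u v. {u, v} \<in> E) k"
    using assms(1,2) by (rule biregular_if_regular)
  moreover have "finite V1" "finite V2"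
    using assms(1) by (auto simp: bipartite_graph_def)
  ultimately have "mirror_rel V1 V2 (\<lambda>u v. {u, v} \<in> E)"
    using biregular_small_mirror_rel assms(3,4) \<open>n \<le> 5\<close> by blast
  then show False
    using assms(5) mirror_iff_mirror_rel by blast
qed

end
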